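(* Let $K$ be a field, $m\ge2$, $d_1,\ldots,d_m$ positive integers, $S=K[x_1,\ldots,x_m,y_1,\ldots,y_m]$, and $I_2(D)\subset S$ the ideal generated by the $2$-minors of $D=\begin{pmatrix}x_1^{d_1}&\cdots&x_m^{d_m}\\ y_1^{d_1}&\cdots&y_m^{d_m}\end{pmatrix}$. For $1\le i<j\le m$ let $f_{ij}=x_i^{d_i}y_j^{d_j}-x_j^{d_j}y_i^{d_i}$. Then for any term order $\prec$ on $S$, the reduced Gröbner basis of $I_2(D)$ with respect to $\prec$ is $\mathcal{G}=\{f_{ij}:1\le i<j\le m\}$. *)

theory Defs
  imports Main "HOL-Library.Poly_Mapping"
begin

(* Multivariate polynomials over 'a in variables of type 'v:
  monomials are exponent vectors 'v \<Rightarrow>0 nat, polynomials are finitely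
  supported maps from monomials to coefficients (convolution product). *)

type_synonym ('v, 'a) mpoly = "('v \<Rightarrow>\<^sub>0 nat) \<Rightarrow>\<^sub>0 'a"

definition term_order :: "(('v \<Rightarrow>\<^sub>0 nat) \<Rightarrow> ('v \<Rightarrow>\<^sub>0 nat) \<Rightarrow> bool) \<Rightarrow> bool" where
  "term_order lt \<longleftrightarrow>
     (\<forall>s. \<not> lt s s) \<and>
     (\<forall>s t u. lt s t \<longrightarrow> lt t u \<longrightarrow> lt s u) \<and>
     (\<forall>s t. s \<noteq> t \<longrightarrow> lt s t \<or> lt t s) \<and>
     (\<forall>s t u. lt s t \<longrightarrow> lt (s + u) (t + u)) \<and>
     (\<forall>t. t \<noteq> 0 \<longrightarrow> lt 0 t)"

definition lm :: "(('v \<Rightarrow>\<^sub>0 nat) \<Rightarrow> ('v \<Rightarrow>\<^sub>0 nat) \<Rightarrow> bool) \<Rightarrow> ('v, 'a::zero) mpoly \<Rightarrow> ('v \<Rightarrow>\<^sub>0 nat)" where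
  "lm lt p = (THE t. t \<in> Poly_Mapping.keys p \<and> (\<forall>s\<in>Poly_Mapping.keys p. s \<noteq> t \<longrightarrow> lt s t))"

definition lc :: "(('v \<Rightarrow>\<^sub>0 nat) \<Rightarrow> ('v \<Rightarrow>\<^sub>0 nat) \<Rightarrow> bool) \<Rightarrow> ('v, 'a::zero) mpoly \<Rightarrow> 'a" where
  "lc lt p = Poly_Mapping.lookup p (lm lt p)"

definition mdvd :: "('v \<Rightarrow>\<^sub>0 nat) \<Rightarrow> ('v \<Rightarrow>\<^sub>0 nat) \<Rightarrow> bool" where
  "mdvd s t \<longleftrightarrow> (\<forall>v. Poly_Mapping.lookup s v \<le> Poly_Mapping.lookup t v)"

definition gen_ideal :: "('v, 'a::comm_ring_1) mpoly set \<Rightarrow> ('v, 'a) mpoly set" where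
  "gen_ideal B = {p. \<exists>F c. finite F \<and> F \<subseteq> B \<and> p = (\<Sum>f\<in>F. c f * f)}"

(* Groebner basis: finite subset of I whose leading monomials generate the
  initial ideal of I. *)
definition is_GB :: "(('v \<Rightarrow>\<^sub>0 nat) \<Rightarrow> ('v \<Rightarrow>\<^sub>0 nat) \<Rightarrow> bool) \<Rightarrow> ('v, 'a::comm_ring_1) mpoly set \<Rightarrow> ('v, 'a) mpoly set \<Rightarrow> bool" where
  "is_GB lt I G \<longleftrightarrow> finite G \<and> G \<subseteq> I \<and>
     (\<forall>f\<in>I. f \<noteq> 0 \<longrightarrow> (\<exists>g\<in>G. g \<noteq> 0 \<and> mdvd (lm lt g) (lm lt f)))"

definition is_reduced_GB :: "(('v \<Rightarrow>\<^sub>0 nat) \<Rightarrow> ('v \<Rightarrow>\<^sub>0 nat) \<Rightarrow> bool) \<Rightarrow> ('v, 'a::comm_ring_1) mpoly set \<Rightarrow> ('v, 'a) mpoly set \<Rightarrow> bool" where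
  "is_reduced_GB lt I G \<longleftrightarrow> is_GB lt I G \<and> 0 \<notin> G \<and>
     (\<forall>g\<in>G. lc lt g = 1) \<and>
     (\<forall>g\<in>G. \<forall>g'\<in>G. g' \<noteq> g \<longrightarrow> (\<forall>t\<in>Poly_Mapping.keys g. \<not> mdvd (lm lt g') t))"

definition monic :: "(('v \<Rightarrow>\<^sub>0 nat) \<Rightarrow> ('v \<Rightarrow>\<^sub>0 nat) \<Rightarrow> bool) \<Rightarrow> ('v, 'a::field) mpoly \<Rightarrow> ('v, 'a) mpoly" where
  "monic lt p = Poly_Mapping.map (\<lambda>c. c / lc lt p) p"

definition varpow :: "'v \<Rightarrow> nat \<Rightarrow> ('v, 'a::{zero,one}) mpoly" where
  "varpow v k = Poly_Mapping.single (Poly_Mapping.single v k) 1"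

(* Variables of S = K[x_1..x_m, y_1..y_m] indexed by bool \<times> 'n, CARD('n) = m:
  x_i = (False, i), y_i = (True, i).  The matrix D has rows x (False), y (True). *)
definition Dmat :: "('n \<Rightarrow> nat) \<Rightarrow> bool \<Rightarrow> 'n \<Rightarrow> (bool \<times> 'n, 'a::{zero,one}) mpoly" where
  "Dmat d r i = varpow (r, i) (d i)"

definition minor2 :: "(bool \<Rightarrow> 'n \<Rightarrow> ('v, 'a::comm_ring_1) mpoly) \<Rightarrow> 'n \<Rightarrow> 'n \<Rightarrow> ('v, 'a) mpoly" where
  "minor2 M i j = M False i * M True j - M False j * M True i"

definition fpoly :: "('n \<Rightarrow> nat) \<Rightarrow> 'n \<Rightarrow> 'n \<Rightarrow> (bool \<times> 'n, 'a::comm_ring_1) mpoly" where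
  "fpoly d i j = varpow (False, i) (d i) * varpow (True, j) (d j)
               - varpow (False, j) (d j) * varpow (True, i) (d i)"

end

theory Submission
  imports Defs
begin

text \<open>Write a monomial as \<open>x^a y^b\<close>. The minor \<open>f_ij\<close> is the difference of the monomials
  \<open>x_i^d_i y_j^d_j\<close> and \<open>x_j^d_j y_i^d_i\<close>, which agree in the invariants \<open>a_k mod d_k\<close>,
  \<open>a_k + b_k\<close> (all \<open>k\<close>) and \<open>\<Sum>_k a_k div d_k\<close>. Hence on every fiber of these invariants the
  coefficients of an element of the ideal sum to zero, and the leading monomial \<open>t\<close> of a
  nonzero element shares its fiber with a smaller monomial \<open>s\<close>. This is impossible if no
  leading monomial of an \<open>f_ij\<close> divides \<open>t\<close>: two distinct monomials of a fiber differ by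
  whole blocks, so \<open>s\<close> contains some \<open>x_i^d_i y_j^d_j\<close> while \<open>t\<close> contains \<open>x_j^d_j y_i^d_i\<close>;
  the latter is then not leading, so exchanging the block in \<open>s\<close> lowers \<open>s\<close> within the fiber
  and brings it closer to \<open>t\<close>, and by induction \<open>t\<close> is the least monomial of its fiber.
  Reducedness holds because distinct monomials \<open>x_i^d_i y_j^d_j\<close> do not divide each other.\<close>

lemma term_order_irrefl: "term_order lt \<Longrightarrow> \<not> lt s s"
  unfolding term_order_def by blast

lemma term_order_trans:
  assumes "term_order lt" shows "lt s t \<Longrightarrow> lt t u \<Longrightarrow> lt s u"
  using assms unfolding term_order_def by blast

lemma term_order_asym: "term_order lt \<Longrightarrow> lt s t \<Longrightarrow> \<not> lt t s"
  using term_order_irrefl term_order_trans by metis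

lemma term_order_neq: "term_order lt \<Longrightarrow> lt s t \<Longrightarrow> t \<noteq> s"
  using term_order_irrefl by blast

lemma term_order_total: "term_order lt \<Longrightarrow> s \<noteq> t \<Longrightarrow> lt s t \<or> lt t s"
  unfolding term_order_def by blast

lemma term_order_add_left:
  assumes "term_order lt" shows "lt s t \<Longrightarrow> lt (u + s) (u + t)"
  using assms unfolding term_order_def by (simp add: add.commute[of u])

lemma lm_eqI:
  assumes "term_order lt" "t \<in> Poly_Mapping.keys p"
    and "\<And>s. s \<in> Poly_Mapping.keys p \<Longrightarrow> s \<noteq> t \<Longrightarrow> lt s t"
  shows "lm lt p = t"
  unfolding lm_def
proof (rule the_equality)
  show "t \<in> Poly_Mapping.keys p \<and> (\<forall>s\<in>Poly_Mapping.keys p. s \<noteq> t \<longrightarrow> lt s t)"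
    using assms(2,3) by simp
  fix u assume u: "u \<in> Poly_Mapping.keys p \<and> (\<forall>s\<in>Poly_Mapping.keys p. s \<noteq> u \<longrightarrow> lt s u)"
  show "u = t"
  proof (rule ccontr)
    assume "u \<noteq> t"
    then have "lt u t" "lt t u" using assms(2,3) u by simp_all
    then show False using term_order_asym[OF assms(1)] by simp
  qed
qed

lemma lm_greatest:
  assumes lt: "term_order lt" and "p \<noteq> 0"
  shows "lm lt p \<in> Poly_Mapping.keys p"
    and "\<And>s. s \<in> Poly_Mapping.keys p \<Longrightarrow> s \<noteq> lm lt p \<Longrightarrow> lt s (lm lt p)"
proof -
  have "asymp_on (Poly_Mapping.keys p) lt"
    by (rule asymp_onI) (erule term_order_asym[OF lt])
  moreover have "transp_on (Poly_Mapping.keys p) lt"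
    by (rule transp_onI) (rule term_order_trans[OF lt])
  ultimately obtain t where t: "t \<in> Poly_Mapping.keys p"
    and maximal: "\<And>s. s \<in> Poly_Mapping.keys p \<Longrightarrow> s \<noteq> t \<Longrightarrow> \<not> lt t s"
    using Finite_Set.bex_max_element[of "Poly_Mapping.keys p" lt] \<open>p \<noteq> 0\<close> by auto
  have greatest: "lt s t" if "s \<in> Poly_Mapping.keys p" "s \<noteq> t" for s
    using maximal[OF that] term_order_total[OF lt that(2)] by simp
  have "lm lt p = t" by (rule lm_eqI[OF lt t greatest])
  then show "lm lt p \<in> Poly_Mapping.keys p"
    and "\<And>s. s \<in> Poly_Mapping.keys p \<Longrightarrow> s \<noteq> lm lt p \<Longrightarrow> lt s (lm lt p)"
    using t greatest by simp_all
qed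

definition binom :: "('v \<Rightarrow>\<^sub>0 nat) \<Rightarrow> ('v \<Rightarrow>\<^sub>0 nat) \<Rightarrow> ('v, 'a::comm_ring_1) mpoly" where
  "binom a b = Poly_Mapping.single a 1 - Poly_Mapping.single b 1"

lemma keys_binom: "a \<noteq> b \<Longrightarrow> Poly_Mapping.keys (binom a b :: ('v, 'a::comm_ring_1) mpoly) = {a, b}"
  by (auto simp: binom_def in_keys_iff lookup_minus lookup_single when_def split: if_splits)

lemma binom_nonzero: "a \<noteq> b \<Longrightarrow> binom a b \<noteq> 0"
  by (metis keys_binom insert_not_empty keys_zero)

lemma binom_swap: "binom b a = - binom a b"
  by (simp add: binom_def)

lemma lm_binom:
  assumes "term_order lt" "lt b a"
  shows "lm lt (binom a b :: ('v, 'a::comm_ring_1) mpoly) = a"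
  using assms term_order_neq[OF assms] by (intro lm_eqI) (auto simp: keys_binom)

lemma lc_binom:
  assumes "term_order lt" "lt b a"
  shows "lc lt (binom a b :: ('v, 'a::comm_ring_1) mpoly) = 1"
  using term_order_neq[OF assms] unfolding lc_def lm_binom[OF assms]
  by (auto simp: binom_def lookup_minus lookup_single when_def)

lemma monic_binom:
  assumes "term_order lt" "lt b a"
  shows "monic lt (binom a b :: ('v, 'a::field) mpoly) = binom a b"
  by (intro poly_mapping_eqI) (simp add: monic_def lc_binom[OF assms] map.rep_eq when_def)

lemma lm_uminus: "lm lt (- p) = lm lt (p :: ('v, 'a::ab_group_add) mpoly)"
  unfolding lm_def by simp

lemma monic_binom_swap:
  assumes "term_order lt" "lt b a"
  shows "monic lt (binom b a :: ('v, 'a::field) mpoly) = binom a b"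
proof -
  have "lm lt (binom b a :: ('v, 'a) mpoly) = a"
    unfolding binom_swap[where a = a and b = b] lm_uminus by (rule lm_binom[OF assms])
  then have "lc lt (binom b a :: ('v, 'a) mpoly) = -1"
    using term_order_neq[OF assms] unfolding lc_def
    by (simp add: binom_def lookup_minus lookup_single)
  then show ?thesis
    unfolding monic_def binom_swap[where a = a and b = b]
    by (intro poly_mapping_eqI) (simp add: map.rep_eq when_def)
qed

definition fiber_sum :: "(('v \<Rightarrow>\<^sub>0 nat) \<Rightarrow> 'b) \<Rightarrow> 'b \<Rightarrow> ('v, 'a::comm_ring_1) mpoly \<Rightarrow> 'a" where
  "fiber_sum \<phi> v p = (\<Sum>s\<in>Poly_Mapping.keys p. if \<phi> s = v then Poly_Mapping.lookup p s else 0)"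

lemma fiber_sum_superset:
  assumes "finite A" "Poly_Mapping.keys p \<subseteq> A"
  shows "fiber_sum \<phi> v p = (\<Sum>s\<in>A. if \<phi> s = v then Poly_Mapping.lookup p s else 0)"
  unfolding fiber_sum_def using assms
  by (intro sum.mono_neutral_left) (auto simp: in_keys_iff)

lemma fiber_sum_add: "fiber_sum \<phi> v (p + q) = fiber_sum \<phi> v p + fiber_sum \<phi> v q"
proof -
  let ?A = "Poly_Mapping.keys p \<union> Poly_Mapping.keys q"
  have "Poly_Mapping.keys (p + q) \<subseteq> ?A" by (rule keys_add)
  then show ?thesis
    by (simp add: fiber_sum_superset[of ?A] lookup_add sum.distrib[symmetric] if_distrib[symmetric])
      (intro sum.cong, auto simp: lookup_add)
qed

lemma fiber_sum_diff: "fiber_sum \<phi> v (p - q) = fiber_sum \<phi> v p - fiber_sum \<phi> v q"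
proof -
  let ?A = "Poly_Mapping.keys p \<union> Poly_Mapping.keys q"
  have "Poly_Mapping.keys (p - q) \<subseteq> ?A"
    by (auto simp: in_keys_iff lookup_minus)
  then show ?thesis
    by (simp add: fiber_sum_superset[of ?A] lookup_minus sum_subtractf[symmetric])
      (intro sum.cong, auto simp: lookup_minus)
qed

lemma fiber_sum_single: "fiber_sum \<phi> v (Poly_Mapping.single s c) = (if \<phi> s = v then c else 0)"
  by (subst fiber_sum_superset[of "{s}"]) auto

lemma fiber_sum_mult_binom:
  assumes "\<And>u. \<phi> (u + a) = \<phi> (u + b)"
  shows "fiber_sum \<phi> v (c * binom a b) = 0"
proof (induction c rule: update_induct)
  case const
  then show ?case by (simp add: fiber_sum_def)
next
  case (update c s k)
  have "Poly_Mapping.update s k c = Poly_Mapping.single s k + c"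
    using update(1) by (intro poly_mapping_eqI)
      (auto simp: lookup_update lookup_add lookup_single when_def in_keys_iff)
  moreover have "fiber_sum \<phi> v (Poly_Mapping.single s k * binom a b) = 0"
    using assms[of s]
    by (simp add: binom_def right_diff_distrib mult_single fiber_sum_diff fiber_sum_single)
  ultimately show ?case
    using update(3) by (simp add: distrib_right fiber_sum_add)
qed

lemma fiber_sum_gen_ideal:
  assumes "\<And>g. g \<in> B \<Longrightarrow> \<exists>a b. g = binom a b \<and> (\<forall>u. \<phi> (u + a) = \<phi> (u + b))"
    and "f \<in> gen_ideal B"
  shows "fiber_sum \<phi> v f = 0"
proof -
  obtain F c where F: "finite F" "F \<subseteq> B" and f: "f = (\<Sum>g\<in>F. c g * g)"
    using assms(2) unfolding gen_ideal_def by blast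
  have "fiber_sum \<phi> v (\<Sum>g\<in>G. c g * g) = 0" if "finite G" "G \<subseteq> B" for G
    using that
  proof (induction G rule: finite_induct)
    case empty
    then show ?case by (simp add: fiber_sum_def)
  next
    case (insert g G)
    then obtain a b where "g = binom a b" "\<forall>u. \<phi> (u + a) = \<phi> (u + b)"
      using assms(1) by blast
    then show ?case
      using insert by (simp add: fiber_sum_add fiber_sum_mult_binom)
  qed
  then show ?thesis using F f by blast
qed

lemma fiber_sum_zero_other_key:
  assumes "fiber_sum \<phi> (\<phi> t) f = 0" "t \<in> Poly_Mapping.keys f"
  obtains s where "s \<in> Poly_Mapping.keys f" "s \<noteq> t" "\<phi> s = \<phi> t"
proof -
  have "\<exists>s\<in>Poly_Mapping.keys f - {t}. \<phi> s = \<phi> t"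
  proof (rule ccontr)
    assume "\<not> ?thesis"
    then have "fiber_sum \<phi> (\<phi> t) f = Poly_Mapping.lookup f t"
      unfolding fiber_sum_def using assms(2)
      by (subst sum.remove[of _ t]) (auto intro!: sum.neutral)
    then show False using assms by (simp add: in_keys_iff)
  qed
  then show ?thesis using that by blast
qed

definition xy_mon :: "('n \<Rightarrow> nat) \<Rightarrow> 'n \<Rightarrow> 'n \<Rightarrow> (bool \<times> 'n) \<Rightarrow>\<^sub>0 nat" where
  "xy_mon d i j = Poly_Mapping.single (False, i) (d i) + Poly_Mapping.single (True, j) (d j)"

lemma lookup_xy_mon:
  "Poly_Mapping.lookup (xy_mon d i j) (b, k) =
     (if b then (if k = j then d j else 0) else (if k = i then d i else 0))"
  by (auto simp: xy_mon_def lookup_add lookup_single when_def)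

lemma fpoly_eq_binom: "fpoly d i j = binom (xy_mon d i j) (xy_mon d j i)"
  by (simp add: fpoly_def binom_def varpow_def mult_single xy_mon_def)

lemma minor2_Dmat_eq_binom: "minor2 (Dmat d) i j = binom (xy_mon d i j) (xy_mon d j i)"
  by (simp add: minor2_def Dmat_def binom_def varpow_def mult_single xy_mon_def)

lemma mdvd_xy_mon_iff:
  assumes "\<forall>i. d i > 0"
  shows "mdvd (xy_mon d k l) (xy_mon d p q) \<longleftrightarrow> k = p \<and> l = q"
proof
  assume "mdvd (xy_mon d k l) (xy_mon d p q)"
  then have "d k \<le> Poly_Mapping.lookup (xy_mon d p q) (False, k)"
    "d l \<le> Poly_Mapping.lookup (xy_mon d p q) (True, l)"
    unfolding mdvd_def by (metis lookup_xy_mon)+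
  then show "k = p \<and> l = q"
    using assms[rule_format, of k] assms[rule_format, of l]
    by (auto simp: lookup_xy_mon split: if_splits)
qed (simp add: mdvd_def)

lemma xy_mon_swap_neq: "\<forall>i. d i > 0 \<Longrightarrow> i \<noteq> j \<Longrightarrow> xy_mon d i j \<noteq> xy_mon d j i"
  using mdvd_xy_mon_iff by (metis mdvd_def order_refl)

lemma mdvd_diff_add: "mdvd a s \<Longrightarrow> s - a + a = s"
  unfolding mdvd_def by (intro poly_mapping_eqI) (simp add: lookup_add lookup_minus)

definition minor_fiber :: "('n::finite \<Rightarrow> nat) \<Rightarrow> ((bool \<times> 'n) \<Rightarrow>\<^sub>0 nat) \<Rightarrow> ('n \<Rightarrow> nat \<times> nat) \<times> nat" where
  "minor_fiber d s =
     ((\<lambda>i. (Poly_Mapping.lookup s (False, i) mod d i,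
            Poly_Mapping.lookup s (False, i) + Poly_Mapping.lookup s (True, i))),
      \<Sum>i\<in>UNIV. Poly_Mapping.lookup s (False, i) div d i)"

lemma sum_div_add_block:
  fixes x :: "'n::finite \<Rightarrow> nat"
  assumes "d i > 0"
  shows "(\<Sum>k\<in>UNIV. (x k + (if k = i then d i else 0)) div d k) = (\<Sum>k\<in>UNIV. x k div d k) + 1"
proof -
  have "(\<Sum>k\<in>UNIV. (x k + (if k = i then d i else 0)) div d k)
      = (\<Sum>k\<in>UNIV. x k div d k + (if k = i then 1 else 0))"
    using assms by (intro sum.cong) (auto simp: div_add_self2)
  then show ?thesis by (simp add: sum.distrib)
qed

lemma minor_fiber_swap:
  assumes "\<forall>i. d i > 0"
  shows "minor_fiber d (u + xy_mon d i j) = minor_fiber d (u + xy_mon d j i)"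
proof -
  let ?x = "\<lambda>k. Poly_Mapping.lookup u (False, k)"
  have "(\<Sum>k\<in>UNIV. Poly_Mapping.lookup (u + xy_mon d i j) (False, k) div d k)
      = (\<Sum>k\<in>UNIV. ?x k div d k) + 1"
    "(\<Sum>k\<in>UNIV. Poly_Mapping.lookup (u + xy_mon d j i) (False, k) div d k)
      = (\<Sum>k\<in>UNIV. ?x k div d k) + 1"
    using sum_div_add_block[of d i ?x] sum_div_add_block[of d j ?x] assms
    by (simp_all add: lookup_add lookup_xy_mon)
  then show ?thesis
    unfolding minor_fiber_def using assms by (auto simp: lookup_add lookup_xy_mon fun_eq_iff)
qed

lemma sum_ex_gt:
  fixes f g :: "'n::finite \<Rightarrow> nat"
  assumes "(\<Sum>i\<in>UNIV. f i) = (\<Sum>i\<in>UNIV. g i)" "f k \<noteq> g k"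
  obtains i where "g i < f i"
proof -
  have "\<not> (\<forall>i. f i \<le> g i)"
  proof
    assume le: "\<forall>i. f i \<le> g i"
    then have "f k < g k" using assms(2) by (simp add: order_less_le)
    then have "(\<Sum>i\<in>UNIV. f i) < (\<Sum>i\<in>UNIV. g i)"
      using le by (intro sum_strict_mono_ex1) auto
    then show False using assms(1) by simp
  qed
  then show ?thesis using that by (auto simp: not_le)
qed

lemma add_le_of_div_less:
  fixes a b c :: nat
  assumes "a mod c = b mod c" "a div c < b div c"
  shows "a + c \<le> b"
proof -
  have "a div c * c + c \<le> b div c * c"
    using mult_le_mono1[of "Suc (a div c)" "b div c" c] assms(2) by simp
  then show ?thesis
    using div_mult_mod_eq[of a c] div_mult_mod_eq[of b c] assms(1) by linarith
qed

lemma same_minor_fiber_exchange: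
  fixes d :: "'n::finite \<Rightarrow> nat"
  assumes fiber: "minor_fiber d s = minor_fiber d t" and "s \<noteq> t"
  obtains i j where "Poly_Mapping.lookup t (False, i) + d i \<le> Poly_Mapping.lookup s (False, i)"
    and "Poly_Mapping.lookup s (False, j) + d j \<le> Poly_Mapping.lookup t (False, j)"
proof -
  let ?x = "\<lambda>s i. Poly_Mapping.lookup s (False, i)"
  let ?q = "\<lambda>s i. ?x s i div d i"
  have mod_eq: "?x s i mod d i = ?x t i mod d i"
    and sum_eq: "?x s i + Poly_Mapping.lookup s (True, i) = ?x t i + Poly_Mapping.lookup t (True, i)"
    and blocks_eq: "(\<Sum>i\<in>UNIV. ?q s i) = (\<Sum>i\<in>UNIV. ?q t i)" for i
    using fiber unfolding minor_fiber_def by (auto simp: fun_eq_iff)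
  have "\<exists>k. ?q s k \<noteq> ?q t k"
  proof (rule ccontr)
    assume "\<nexists>k. ?q s k \<noteq> ?q t k"
    then have x_eq: "?x s k = ?x t k" for k
      using mod_eq[of k] by (metis div_mult_mod_eq)
    have "s = t"
    proof (rule poly_mapping_eqI)
      fix v :: "bool \<times> 'n"
      obtain b k where "v = (b, k)" by (cases v)
      then show "Poly_Mapping.lookup s v = Poly_Mapping.lookup t v"
        using x_eq[of k] sum_eq[of k] by (cases b) simp_all
    qed
    then show False using \<open>s \<noteq> t\<close> by simp
  qed
  then obtain k where k: "?q s k \<noteq> ?q t k" by blast
  obtain i where "?q t i < ?q s i" using sum_ex_gt[OF blocks_eq k] .
  moreover obtain j where "?q s j < ?q t j" using sum_ex_gt[OF blocks_eq[symmetric] k[symmetric]] .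
  ultimately show ?thesis
    using that add_le_of_div_less mod_eq by metis
qed

lemma xy_mon_mdvd_of_exchange:
  assumes "minor_fiber d s = minor_fiber d t"
    and "Poly_Mapping.lookup t (False, i) + d i \<le> Poly_Mapping.lookup s (False, i)"
    and "Poly_Mapping.lookup s (False, j) + d j \<le> Poly_Mapping.lookup t (False, j)"
  shows "mdvd (xy_mon d i j) s"
proof -
  have "Poly_Mapping.lookup s (False, j) + Poly_Mapping.lookup s (True, j)
      = Poly_Mapping.lookup t (False, j) + Poly_Mapping.lookup t (True, j)"
    using assms(1) unfolding minor_fiber_def by (auto simp: fun_eq_iff)
  then show ?thesis
    using assms(2,3) unfolding mdvd_def by (auto simp: lookup_xy_mon)
qed

lemma standard_monomial_least_in_minor_fiber:
  fixes d :: "'n::finite \<Rightarrow> nat"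
  assumes lt: "term_order lt" and d: "\<forall>i. d i > 0"
    and standard: "\<And>i j. lt (xy_mon d j i) (xy_mon d i j) \<Longrightarrow> \<not> mdvd (xy_mon d i j) t"
    and "minor_fiber d s = minor_fiber d t"
  shows "s = t \<or> lt t s"
proof -
  define excess where
    "excess s = (\<Sum>k\<in>UNIV. Poly_Mapping.lookup s (False, k) - Poly_Mapping.lookup t (False, k))" for s
  show ?thesis
    using \<open>minor_fiber d s = minor_fiber d t\<close>
  proof (induction "excess s" arbitrary: s rule: less_induct)
    case less
    show ?case
    proof (cases "s = t")
      case False
      then obtain i j
        where i: "Poly_Mapping.lookup t (False, i) + d i \<le> Poly_Mapping.lookup s (False, i)"
          and j: "Poly_Mapping.lookup s (False, j) + d j \<le> Poly_Mapping.lookup t (False, j)"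
        using same_minor_fiber_exchange[OF less.prems] by blast
      have "i \<noteq> j" using i j d by (metis add_le_cancel_left le_add1 le_trans not_le)
      have dvd_s: "mdvd (xy_mon d i j) s"
        by (rule xy_mon_mdvd_of_exchange[OF less.prems i j])
      have "mdvd (xy_mon d j i) t"
        by (rule xy_mon_mdvd_of_exchange[OF less.prems[symmetric] j i])
      then have "\<not> lt (xy_mon d i j) (xy_mon d j i)" using standard by blast
      then have down: "lt (xy_mon d j i) (xy_mon d i j)"
        using term_order_total[OF lt xy_mon_swap_neq[OF d \<open>i \<noteq> j\<close>]] by blast
      define s' where "s' = (s - xy_mon d i j) + xy_mon d j i"
      have s: "s = (s - xy_mon d i j) + xy_mon d i j" using mdvd_diff_add[OF dvd_s] by simp
      have "lt s' s"
        unfolding s'_def by (subst (2) s) (rule term_order_add_left[OF lt down])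
      have "minor_fiber d s' = minor_fiber d t"
        using less.prems minor_fiber_swap[OF d, of "s - xy_mon d i j" i j] s unfolding s'_def by simp
      moreover have "excess s' < excess s"
        unfolding excess_def
      proof (rule sum_strict_mono_ex1)
        show "\<forall>k\<in>UNIV. Poly_Mapping.lookup s' (False, k) - Poly_Mapping.lookup t (False, k)
            \<le> Poly_Mapping.lookup s (False, k) - Poly_Mapping.lookup t (False, k)"
          using j \<open>i \<noteq> j\<close> by (auto simp: s'_def lookup_add lookup_minus lookup_xy_mon)
        show "\<exists>k\<in>UNIV. Poly_Mapping.lookup s' (False, k) - Poly_Mapping.lookup t (False, k)
            < Poly_Mapping.lookup s (False, k) - Poly_Mapping.lookup t (False, k)"
          using i d[rule_format, of i] \<open>i \<noteq> j\<close>
          by (intro bexI[of _ i]) (auto simp: s'_def lookup_add lookup_minus lookup_xy_mon)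
      qed simp
      ultimately have "s' = t \<or> lt t s'" using less.hyps by blast
      then show ?thesis using \<open>lt s' s\<close> term_order_trans[OF lt] by blast
    qed simp
  qed
qed

definition minor_basis ::
  "(((bool \<times> 'n) \<Rightarrow>\<^sub>0 nat) \<Rightarrow> ((bool \<times> 'n) \<Rightarrow>\<^sub>0 nat) \<Rightarrow> bool) \<Rightarrow> ('n \<Rightarrow> nat)
     \<Rightarrow> (bool \<times> 'n, 'a::comm_ring_1) mpoly set" where
  "minor_basis lt d = {binom (xy_mon d i j) (xy_mon d j i) | i j. lt (xy_mon d j i) (xy_mon d i j)}"

lemma monic_fpoly_image:
  fixes d :: "'n::linorder \<Rightarrow> nat"
  assumes lt: "term_order lt" and d: "\<forall>i. d i > 0"
  shows "monic lt ` {fpoly d i j | i j. i < j} = (minor_basis lt d :: (bool \<times> 'n, 'a::field) mpoly set)"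
proof (intro equalityI subsetI)
  fix g :: "(bool \<times> 'n, 'a) mpoly"
  assume "g \<in> monic lt ` {fpoly d i j | i j. i < j}"
  then obtain i j where "i < j" and g: "g = monic lt (binom (xy_mon d i j) (xy_mon d j i))"
    by (auto simp: fpoly_eq_binom)
  then consider "lt (xy_mon d j i) (xy_mon d i j)" | "lt (xy_mon d i j) (xy_mon d j i)"
    using term_order_total[OF lt xy_mon_swap_neq[OF d]] by force
  then show "g \<in> minor_basis lt d"
    unfolding minor_basis_def g
    by cases (force simp: monic_binom[OF lt] monic_binom_swap[OF lt])+
next
  fix g :: "(bool \<times> 'n, 'a) mpoly"
  assume "g \<in> minor_basis lt d"
  then obtain i j where down: "lt (xy_mon d j i) (xy_mon d i j)"
    and g: "g = binom (xy_mon d i j) (xy_mon d j i)"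
    unfolding minor_basis_def by blast
  then have "i \<noteq> j" using term_order_irrefl[OF lt] by blast
  then consider "i < j" | "j < i" by fastforce
  then show "g \<in> monic lt ` {fpoly d i j | i j. i < j}"
  proof cases
    case 1
    then show ?thesis
      using monic_binom[OF lt down] unfolding g fpoly_eq_binom by force
  next
    case 2
    show ?thesis
      unfolding g fpoly_eq_binom
    proof (rule image_eqI)
      show "binom (xy_mon d i j) (xy_mon d j i) = monic lt (binom (xy_mon d j i) (xy_mon d i j))"
        by (rule monic_binom_swap[OF lt down, symmetric])
      show "binom (xy_mon d j i) (xy_mon d i j) \<in> {binom (xy_mon d i j) (xy_mon d j i) |i j. i < j}"
        using 2 by blast
    qed
  qed
qed

lemma finite_minor_basis: "finite (minor_basis lt (d :: 'n::finite \<Rightarrow> nat))"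
proof -
  have "minor_basis lt d \<subseteq> (\<lambda>(i, j). binom (xy_mon d i j) (xy_mon d j i)) ` UNIV"
    unfolding minor_basis_def by auto
  then show ?thesis by (rule finite_subset) simp
qed

lemma gen_ideal_mult_mem: "h \<in> B \<Longrightarrow> c * h \<in> gen_ideal B"
  unfolding gen_ideal_def by (intro CollectI exI[of _ "{h}"] exI[of _ "\<lambda>_. c"]) simp

lemma minor_basis_subset_ideal:
  fixes d :: "'n::linorder \<Rightarrow> nat"
  assumes lt: "term_order lt"
  shows "minor_basis lt d \<subseteq> gen_ideal {minor2 (Dmat d) i j | i j. i < j}"
proof
  fix g assume "g \<in> minor_basis lt d"
  then obtain i j where down: "lt (xy_mon d j i) (xy_mon d i j)"
    and g: "g = binom (xy_mon d i j) (xy_mon d j i)"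
    unfolding minor_basis_def by blast
  then have "i \<noteq> j" using term_order_irrefl[OF lt] by blast
  then have "i < j \<or> j < i" by auto
  then show "g \<in> gen_ideal {minor2 (Dmat d) i j | i j. i < j}"
  proof
    assume "i < j"
    then have "minor2 (Dmat d) i j \<in> {minor2 (Dmat d) i j | i j. i < j}" by blast
    from gen_ideal_mult_mem[OF this, of 1] show ?thesis
      by (simp add: g minor2_Dmat_eq_binom)
  next
    assume "j < i"
    then have "minor2 (Dmat d) j i \<in> {minor2 (Dmat d) i j | i j. i < j}" by blast
    from gen_ideal_mult_mem[OF this, of "-1"] show ?thesis
      by (simp add: g minor2_Dmat_eq_binom binom_swap[where a = "xy_mon d j i"])
  qed
qed

lemma minor_basis_monic:
  assumes "term_order lt" "g \<in> minor_basis lt d"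
  shows "g \<noteq> 0" and "lc lt g = 1"
proof -
  obtain i j where "lt (xy_mon d j i) (xy_mon d i j)" "g = binom (xy_mon d i j) (xy_mon d j i)"
    using assms(2) unfolding minor_basis_def by blast
  then show "g \<noteq> 0" "lc lt g = 1"
    using binom_nonzero[OF term_order_neq[OF assms(1)]] lc_binom[OF assms(1)] by simp_all
qed

lemma minor_basis_lm_mdvd:
  fixes d :: "'n::{finite,linorder} \<Rightarrow> nat" and f :: "(bool \<times> 'n, 'a::comm_ring_1) mpoly"
  assumes lt: "term_order lt" and d: "\<forall>i. d i > 0"
    and f: "f \<in> gen_ideal {minor2 (Dmat d) i j | i j. i < j}" and "f \<noteq> 0"
  shows "\<exists>g \<in> (minor_basis lt d :: (bool \<times> 'n, 'a) mpoly set). mdvd (lm lt g) (lm lt f)"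
proof (rule ccontr)
  assume none: "\<not> ?thesis"
  let ?t = "lm lt f"
  have standard: "\<not> mdvd (xy_mon d i j) ?t" if "lt (xy_mon d j i) (xy_mon d i j)" for i j
  proof -
    have "(binom (xy_mon d i j) (xy_mon d j i) :: (bool \<times> 'n, 'a) mpoly) \<in> minor_basis lt d"
      using that unfolding minor_basis_def by blast
    with none show ?thesis using lm_binom[OF lt that] by metis
  qed
  have "\<exists>a b. g = binom a b \<and> (\<forall>u. minor_fiber d (u + a) = minor_fiber d (u + b))"
    if "g \<in> {minor2 (Dmat d) i j | i j. i < j}" for g
    using that minor_fiber_swap[OF d] unfolding minor2_Dmat_eq_binom by blast
  then have "fiber_sum (minor_fiber d) (minor_fiber d ?t) f = 0"
    using f by (rule fiber_sum_gen_ideal)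
  then obtain s where s: "s \<in> Poly_Mapping.keys f" "s \<noteq> ?t" "minor_fiber d s = minor_fiber d ?t"
    using fiber_sum_zero_other_key lm_greatest(1)[OF lt \<open>f \<noteq> 0\<close>] by metis
  then have "lt s ?t" using lm_greatest(2)[OF lt \<open>f \<noteq> 0\<close>] by blast
  moreover have "s = ?t \<or> lt ?t s"
    using standard_monomial_least_in_minor_fiber[OF lt d standard s(3)] by blast
  ultimately show False using s(2) term_order_asym[OF lt] by blast
qed

lemma minor_basis_interreduced:
  assumes lt: "term_order lt" and d: "\<forall>i. d i > 0"
    and g: "g \<in> minor_basis lt d" and g': "g' \<in> minor_basis lt d" and "g' \<noteq> g"
    and t: "t \<in> Poly_Mapping.keys g"
  shows "\<not> mdvd (lm lt g') t"
proof
  obtain i j where ij: "lt (xy_mon d j i) (xy_mon d i j)" "g = binom (xy_mon d i j) (xy_mon d j i)"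
    using g unfolding minor_basis_def by blast
  obtain k l where kl: "lt (xy_mon d l k) (xy_mon d k l)" "g' = binom (xy_mon d k l) (xy_mon d l k)"
    using g' unfolding minor_basis_def by blast
  assume "mdvd (lm lt g') t"
  moreover have "t = xy_mon d i j \<or> t = xy_mon d j i"
    using t ij(2) by (simp add: keys_binom[OF term_order_neq[OF lt ij(1)]])
  ultimately have "(k, l) = (i, j) \<or> (k, l) = (j, i)"
    using kl(2) by (auto simp: lm_binom[OF lt kl(1)] mdvd_xy_mon_iff[OF d])
  then show False
    using \<open>g' \<noteq> g\<close> ij kl term_order_asym[OF lt] by auto
qed

theorem theorem4p1:
  fixes d :: "'n::{finite,linorder} \<Rightarrow> nat"
    and lt :: "((bool \<times> 'n) \<Rightarrow>\<^sub>0 nat) \<Rightarrow> ((bool \<times> 'n) \<Rightarrow>\<^sub>0 nat) \<Rightarrow> bool"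
  assumes "card (UNIV :: 'n set) \<ge> 2"
    and "\<forall>i. d i > 0"
    and "term_order lt"
  shows "is_reduced_GB lt
           (gen_ideal {minor2 (Dmat d :: bool \<Rightarrow> 'n \<Rightarrow> (bool \<times> 'n, 'a::field) mpoly) i j | i j. i < j})
           (monic lt ` {fpoly d i j | i j. i < j})"
  unfolding is_reduced_GB_def is_GB_def monic_fpoly_image[OF assms(3,2)]
  using finite_minor_basis minor_basis_subset_ideal[OF assms(3)]
    minor_basis_lm_mdvd[OF assms(3,2)] minor_basis_monic[OF assms(3)]
    minor_basis_interreduced[OF assms(3,2)]
  by blast

end
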